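(* Let $P$ be a positroid on $[n]$ and $X\subseteq[n]$. If both $P|_X$ and $P/X$ are connected, then $X$ is a cyclic interval of $[n]$.
   Context: A positroid of rank $k$ on $[n]$ is the matroid of a real $k\times n$ matrix of rank $k$ all of whose maximal minors are nonnegative. A cyclic interval is a subset of $[n]$ of the form $\{a,a+1,\dots,b\}$ with indices read modulo $n$ (i.e. the image of an interval under a cyclic permutation). A matroid is connected if it is not a direct sum of two matroids on nonempty ground sets; $P|_X$ is restriction and $P/X$ contraction. *)

theory Defs
  imports "Jordan_Normal_Form.DL_Rank_Submatrix"
begin

text \<open>Conventions. The ground set [n] is represented as {0..<n} (columns of a
JNF matrix are indexed from 0). A matroid on a finite ground set E is given
by its family of bases.\<close>

definition matroid_bases :: "'a set \<Rightarrow> 'a set set \<Rightarrow> bool" where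
  "matroid_bases E \<B> \<longleftrightarrow> finite E \<and> \<B> \<noteq> {} \<and> (\<forall>B\<in>\<B>. B \<subseteq> E) \<and>
     (\<forall>B1\<in>\<B>. \<forall>B2\<in>\<B>. \<forall>x\<in>B1 - B2. \<exists>y\<in>B2 - B1. insert y (B1 - {x}) \<in> \<B>)"

definition restr_bases :: "'a set set \<Rightarrow> 'a set \<Rightarrow> 'a set set" where
  "restr_bases \<B> X = {I. (\<exists>B\<in>\<B>. I = B \<inter> X) \<and> \<not> (\<exists>B\<in>\<B>. I \<subset> B \<inter> X)}"

definition contr_bases :: "'a set set \<Rightarrow> 'a set \<Rightarrow> 'a set set" where
  "contr_bases \<B> X = {B - X | B. B \<in> \<B> \<and> B \<inter> X \<in> restr_bases \<B> X}"

definition direct_sum_bases :: "'a set set \<Rightarrow> 'a set set \<Rightarrow> 'a set set" where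
  "direct_sum_bases \<B>1 \<B>2 = {B1 \<union> B2 | B1 B2. B1 \<in> \<B>1 \<and> B2 \<in> \<B>2}"

definition connected_matroid :: "'a set \<Rightarrow> 'a set set \<Rightarrow> bool" where
  "connected_matroid E \<B> \<longleftrightarrow>
     \<not> (\<exists>E1 E2 \<B>1 \<B>2. E1 \<noteq> {} \<and> E2 \<noteq> {} \<and> E1 \<inter> E2 = {} \<and> E1 \<union> E2 = E \<and>
          matroid_bases E1 \<B>1 \<and> matroid_bases E2 \<B>2 \<and> \<B> = direct_sum_bases \<B>1 \<B>2)"

text \<open>Maximal minor of a k x n matrix A with column set I (columns in increasing order).\<close>
definition max_minor :: "real mat \<Rightarrow> nat set \<Rightarrow> real" where
  "max_minor A I = det (submatrix A {..<dim_row A} I)"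

definition positroid :: "nat \<Rightarrow> nat set set \<Rightarrow> bool" where
  "positroid n \<B> \<longleftrightarrow> (\<exists>k A. A \<in> carrier_mat k n \<and> vec_space.rank k A = k \<and>
     (\<forall>I. I \<subseteq> {..<n} \<and> card I = k \<longrightarrow> max_minor A I \<ge> 0) \<and>
     \<B> = {I. I \<subseteq> {..<n} \<and> card I = k \<and> max_minor A I \<noteq> 0})"

text \<open>Cyclic intervals of {0..<n}; the empty set is counted as a (degenerate) cyclic interval.\<close>
definition cyclic_interval :: "nat \<Rightarrow> nat set \<Rightarrow> bool" where
  "cyclic_interval n X \<longleftrightarrow> X = {} \<or>
     (\<exists>a<n. \<exists>m. 1 \<le> m \<and> m \<le> n \<and> X = {(a + i) mod n | i. i < m})"

end

(*
  Write the positroid as the matroid of a real k x n matrix A whose maximal minors D(I) are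
  nonnegative. The Grassmann-Pluecker relations among these minors give the symmetric basis
  exchange property and, for a < b < c < d outside a (k-2)-set S, the three-term relation
    D(S+a+c) D(S+b+d) = D(S+a+b) D(S+c+d) + D(S+a+d) D(S+b+c).
  If X is not a cyclic interval, there are p, q in X and y1, y2 outside X with y1 < p < y2 and
  q not between y1 and y2. In the connected matroid P|X basis exchanges link p to q, so some
  exchange a <-> b separates y1 from y2; in the connected matroid P/X basis exchanges link y1
  to y2, so some exchange c <-> d has c strictly between a and b and d outside. Gluing bases of
  P|X and P/X yields S such that S+a+c and S+b+d are bases of P while S+a+b is not. For the
  crossing pairs {a,b} and {c,d} the three-term relation then equates a sum containing the
  positive product D(S+a+c) D(S+b+d) with a product containing D(S+a+b) = 0.
*)

theory Submission
  imports Defs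
begin

section \<open>Minors of column lists\<close>

definition det_cols :: "nat \<Rightarrow> 'a :: comm_ring_1 vec list \<Rightarrow> 'a" where
  "det_cols k vs = det (mat_of_cols k vs)"

definition list_minor :: "'a :: comm_ring_1 mat \<Rightarrow> nat \<Rightarrow> nat list \<Rightarrow> 'a" where
  "list_minor A k js = det_cols k (map (col A) js)"

definition set_minor :: "'a :: comm_ring_1 mat \<Rightarrow> nat \<Rightarrow> nat set \<Rightarrow> 'a" where
  "set_minor A k I = list_minor A k (sorted_list_of_set I)"

lemma col_carrier_vec: "A \<in> carrier_mat k n \<Longrightarrow> col A j \<in> carrier_vec k"
  unfolding col_def by auto

lemma det_cols_swap_adjacent:
  assumes "set (xs @ [a,b] @ ys) \<subseteq> carrier_vec k" "length (xs @ [a,b] @ ys) = k"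
  shows "det_cols k (xs @ [b,a] @ ys) = - det_cols k (xs @ [a,b] @ ys)"
proof -
  let ?i = "length xs"
  let ?M = "mat_of_cols k (xs @ [a,b] @ ys)"
  have M: "?M \<in> carrier_mat k k" using assms by auto
  have "swapcols ?i (Suc ?i) ?M = mat_of_cols k (xs @ [b,a] @ ys)"
    by (rule eq_matI) (auto simp: mat_of_cols_def nth_append)
  moreover have "det (swapcols ?i (Suc ?i) ?M) = - det ?M"
    by (rule det_swapcols) (use assms M in auto)
  ultimately show ?thesis unfolding det_cols_def by simp
qed

lemma det_cols_move_to_end:
  assumes "set (xs @ [u] @ ys) \<subseteq> carrier_vec k" "length (xs @ [u] @ ys) = k"
  shows "det_cols k (xs @ [u] @ ys) = (-1)^(length ys) * det_cols k (xs @ ys @ [u])"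
  using assms
proof (induction ys arbitrary: xs)
  case Nil then show ?case by simp
next
  case (Cons y ys)
  have "det_cols k (xs @ [u] @ y # ys) = - det_cols k (xs @ [y, u] @ ys)"
    using det_cols_swap_adjacent[of xs y u ys k] Cons.prems by auto
  also have "xs @ [y, u] @ ys = (xs @ [y]) @ [u] @ ys" by simp
  also have "det_cols k \<dots> = (-1)^(length ys) * det_cols k ((xs @ [y]) @ ys @ [u])"
    by (rule Cons.IH) (use Cons.prems in auto)
  finally show ?case by simp
qed

lemma det_cols_repeated:
  assumes "set (vs @ [v]) \<subseteq> carrier_vec k" "length vs + 1 = k" "v \<in> set vs"
  shows "det_cols k (vs @ [v]) = 0"
proof -
  obtain i where i: "i < length vs" "vs ! i = v" using assms(3) by (auto simp: in_set_conv_nth)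
  let ?M = "mat_of_cols k (vs @ [v])"
  have M: "?M \<in> carrier_mat k k" using assms(2) by auto
  have nth: "(vs @ [v]) ! j \<in> carrier_vec k" if "j < length (vs @ [v])" for j
    using assms(1) nth_mem[OF that] by blast
  have "col ?M i = (vs @ [v]) ! i" using i assms(2) nth by (intro col_mat_of_cols) auto
  also have "\<dots> = (vs @ [v]) ! length vs" using i by (simp add: nth_append)
  also have "\<dots> = col ?M (length vs)" using assms(1,2) nth by (intro col_mat_of_cols[symmetric]) auto
  finally have "col ?M i = col ?M (length vs)" .
  hence "det ?M = 0" using det_identical_cols[OF M, of i "length vs"] i assms(2) by auto
  thus ?thesis unfolding det_cols_def .
qed

lemma sorted_insort_split:
  fixes S :: "nat list"
  assumes "sorted S" "u \<notin> set S"
  shows "\<exists>xs ys. S = xs @ ys \<and> insort u S = xs @ u # ys \<and>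
           length ys = length (filter (\<lambda>s. u < s) S)"
  using assms
proof (induction S)
  case Nil then show ?case by simp
next
  case (Cons s S)
  show ?case
  proof (cases "u \<le> s")
    case True
    have "u < s" using True Cons.prems(2) by auto
    moreover have "\<forall>t\<in>set S. s \<le> t" using Cons.prems(1) by simp
    ultimately have "\<forall>t\<in>set (s # S). u < t" by force
    hence "filter (\<lambda>t. u < t) (s # S) = s # S" by (rule filter_True)
    with True show ?thesis by (intro exI[of _ "[]"] exI[of _ "s # S"]) simp
  next
    case False
    have "sorted S" "u \<notin> set S" using Cons.prems by auto
    with Cons.IH obtain xs ys where "S = xs @ ys" "insort u S = xs @ u # ys"
        "length ys = length (filter (\<lambda>s. u < s) S)"
      by blast
    with False show ?thesis by (intro exI[of _ "s # xs"] exI[of _ ys]) simp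
  qed
qed

lemma list_minor_sorted_insert:
  assumes A: "A \<in> carrier_mat k n" and I: "finite I" "u \<notin> I" "card I + 1 = k"
  shows "list_minor A k (sorted_list_of_set (insert u I)) =
         (-1)^(card {s\<in>I. u < s}) * list_minor A k (sorted_list_of_set I @ [u])"
proof -
  let ?S = "sorted_list_of_set I"
  obtain xs ys where xy: "?S = xs @ ys" "insort u ?S = xs @ u # ys"
      "length ys = length (filter (\<lambda>s. u < s) ?S)"
    using sorted_insort_split[of ?S u] I by auto
  have "length (filter (\<lambda>s. u < s) ?S) = card {s\<in>I. u < s}"
    using distinct_length_filter[of ?S "\<lambda>s. u < s"] I by (simp add: Int_def conj_commute)
  hence ys: "length ys = card {s\<in>I. u < s}" using xy by simp
  have "length ?S = card I" by simp
  hence len: "length (map (col A) (xs @ [u] @ ys)) = k" using xy I by simp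
  have "list_minor A k (sorted_list_of_set (insert u I)) =
        det_cols k (map (col A) xs @ [col A u] @ map (col A) ys)"
    unfolding list_minor_def using I xy by simp
  also have "\<dots> = (-1)^(length ys) * det_cols k (map (col A) xs @ map (col A) ys @ [col A u])"
    using det_cols_move_to_end[of "map (col A) xs" "col A u" "map (col A) ys" k] len
      col_carrier_vec[OF A] by auto
  also have "\<dots> = (-1)^(card {s\<in>I. u < s}) * list_minor A k (?S @ [u])"
    unfolding list_minor_def ys xy by simp
  finally show ?thesis .
qed

lemma list_minor_sorted_insert_pair:
  assumes A: "A \<in> carrier_mat k n" and S: "finite S" "x \<notin> S" "y \<notin> S" "card S + 2 = k"
    and "x < y"
  shows "list_minor A k (sorted_list_of_set S @ [x, y]) =
         (-1)^(card {s\<in>S. x < s} + card {s\<in>S. y < s}) *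
         list_minor A k (sorted_list_of_set (insert x (insert y S)))"
proof -
  let ?S = "sorted_list_of_set S"
  obtain xs ys where xy: "?S = xs @ ys" "insort y ?S = xs @ y # ys"
      "length ys = length (filter (\<lambda>s. y < s) ?S)"
    using sorted_insort_split[of ?S y] S by auto
  have "length (filter (\<lambda>s. y < s) ?S) = card {s\<in>S. y < s}"
    using distinct_length_filter[of ?S "\<lambda>s. y < s"] S by (simp add: Int_def conj_commute)
  hence ys: "length ys = card {s\<in>S. y < s}" using xy by simp
  have Sy: "sorted_list_of_set (insert y S) = xs @ y # ys" using xy S by simp
  have "length ?S = card S" by simp
  hence len: "length (map (col A) xs @ [col A y] @ map (col A) (ys @ [x])) = k"
    using xy S by simp
  have move_y: "list_minor A k (sorted_list_of_set (insert y S) @ [x]) =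
      (-1)^(card {s\<in>S. y < s} + 1) * list_minor A k (?S @ [x, y])"
  proof -
    have "list_minor A k (sorted_list_of_set (insert y S) @ [x]) =
          det_cols k (map (col A) xs @ [col A y] @ map (col A) (ys @ [x]))"
      unfolding list_minor_def Sy by simp
    also have "\<dots> = (-1)^(length (ys @ [x])) *
        det_cols k (map (col A) xs @ map (col A) (ys @ [x]) @ [col A y])"
      using det_cols_move_to_end[of "map (col A) xs" "col A y" "map (col A) (ys @ [x])" k] len
        col_carrier_vec[OF A] by auto
    also have "\<dots> = (-1)^(card {s\<in>S. y < s} + 1) * list_minor A k (?S @ [x, y])"
      unfolding list_minor_def xy(1) ys[symmetric] by simp
    finally show ?thesis .
  qed
  have "{s\<in>insert y S. x < s} = insert y {s\<in>S. x < s}" using \<open>x < y\<close> by auto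
  hence "card {s\<in>insert y S. x < s} = card {s\<in>S. x < s} + 1" using S by simp
  hence move_x: "list_minor A k (sorted_list_of_set (insert x (insert y S))) =
      (-1)^(card {s\<in>S. x < s} + 1) * list_minor A k (sorted_list_of_set (insert y S) @ [x])"
    using list_minor_sorted_insert[OF A, of "insert y S" x] S \<open>x < y\<close> by simp
  show ?thesis unfolding move_x move_y by (simp add: power_add ac_simps)
qed

lemma list_minor_repeated:
  assumes A: "A \<in> carrier_mat k n" and "length V + 1 = k" "u \<in> set V"
  shows "list_minor A k (V @ [u]) = 0"
proof -
  have "det_cols k (map (col A) V @ [col A u]) = 0"
    by (rule det_cols_repeated) (use assms col_carrier_vec[OF A] in auto)
  thus ?thesis unfolding list_minor_def by simp
qed

lemma set_take_sorted_list_of_set: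
  assumes "finite I" "j < card I"
  shows "set (take j (sorted_list_of_set I)) = {a\<in>I. a < sorted_list_of_set I ! j}"
proof (intro equalityI subsetI)
  let ?s = "sorted_list_of_set I"
  have st: "sorted_wrt (<) ?s" and j: "j < length ?s" using assms by simp_all
  fix a
  {
    assume "a \<in> set (take j ?s)"
    then obtain i where i: "i < j" "a = ?s ! i" using assms by (auto simp: in_set_conv_nth)
    hence "a \<in> set ?s" using j by simp
    moreover have "?s ! i < ?s ! j" by (rule sorted_wrt_nth_less[OF st i(1) j])
    ultimately show "a \<in> {a\<in>I. a < ?s ! j}" using i assms(1) by simp
  next
    assume a: "a \<in> {a\<in>I. a < ?s ! j}"
    hence "a \<in> set ?s" using assms(1) by simp
    then obtain i where i: "i < card I" "a = ?s ! i" by (auto simp: in_set_conv_nth)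
    have "i < j"
    proof (rule ccontr)
      assume "\<not> i < j"
      hence "?s ! j \<le> ?s ! i" using i st by (simp add: sorted_nth_mono)
      thus False using a i by auto
    qed
    thus "a \<in> set (take j ?s)" using i assms by (auto simp: in_set_conv_nth intro!: exI[of _ i])
  }
qed

lemma pick_eq_sorted_list_nth:
  assumes "finite I" "j < card I"
  shows "pick I j = sorted_list_of_set I ! j"
proof -
  let ?x = "sorted_list_of_set I ! j"
  have "?x \<in> I" using assms nth_mem[of j "sorted_list_of_set I"] by simp
  moreover have "card {a\<in>I. a < ?x} = j"
    using set_take_sorted_list_of_set[OF assms, symmetric] assms by (simp add: distinct_card)
  ultimately show ?thesis using pick_card_in_set by metis
qed

lemma max_minor_eq_set_minor:
  assumes A: "A \<in> carrier_mat k n" and I: "I \<subseteq> {..<n}"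
  shows "max_minor A I = set_minor A k I"
proof -
  let ?L = "sorted_list_of_set I"
  have fI: "finite I" using I finite_subset by blast
  have rows: "card {i. i < dim_row A \<and> i \<in> {..<dim_row A}} = k" using A by simp
  have I_cols: "{j. j < n \<and> j \<in> I} = I" using I by auto
  hence cols: "card {j. j < dim_col A \<and> j \<in> I} = card I" using A by simp
  have pick_rows: "pick {..<k} i = i" if "i < k" for i
  proof -
    have "{a\<in>{..<k}. a < i} = {..<i}" using that by auto
    thus ?thesis using pick_card_in_set[of i "{..<k}"] that by simp
  qed
  have "submatrix A {..<dim_row A} I = mat_of_cols k (map (col A) ?L)"
  proof (rule eq_matI)
    fix i j assume "i < dim_row (mat_of_cols k (map (col A) ?L))"
      "j < dim_col (mat_of_cols k (map (col A) ?L))"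
    hence i: "i < k" and j: "j < card I" by auto
    have "?L ! j \<in> I" using j fI nth_mem[of j ?L] by simp
    hence "?L ! j < n" using I by auto
    moreover have "submatrix A {..<dim_row A} I $$ (i, j) = A $$ (i, ?L ! j)"
      using submatrix_index[of i A "{..<dim_row A}" j I] rows cols i j pick_rows
        pick_eq_sorted_list_nth[OF fI j] A by simp
    ultimately show "submatrix A {..<dim_row A} I $$ (i, j) = mat_of_cols k (map (col A) ?L) $$ (i, j)"
      using i j A by (simp add: mat_of_cols_def)
  qed (use A in \<open>simp_all add: dim_submatrix rows I_cols\<close>)
  thus ?thesis unfolding max_minor_def set_minor_def list_minor_def det_cols_def by simp
qed

section \<open>Grassmann-Pluecker relations\<close>

lemma det_cols_append_linear:
  fixes W :: "'a :: comm_ring_1 vec list"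
  assumes k: "k \<ge> 1" and lW: "length W = k - 1"
  obtains c where "\<And>v. v \<in> carrier_vec k \<Longrightarrow> det_cols k (W @ [v]) = (\<Sum>i<k. v $ i * c i)"
proof
  define N0 where "N0 = mat_of_cols k (W @ [0\<^sub>v k])"
  fix v :: "'a vec" assume v: "v \<in> carrier_vec k"
  let ?N = "mat_of_cols k (W @ [v])"
  have N: "?N \<in> carrier_mat k k" using lW k by auto
  have "det ?N = (\<Sum>i<k. ?N $$ (i, k-1) * cofactor ?N i (k-1))"
    by (rule laplace_expansion_column[OF N]) (use k in simp)
  also have "\<dots> = (\<Sum>i<k. v $ i * cofactor N0 i (k-1))"
  proof (rule sum.cong[OF refl])
    fix i assume i: "i \<in> {..<k}"
    have "mat_delete ?N i (k-1) = mat_delete N0 i (k-1)"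
      unfolding N0_def by (rule eq_matI) (use lW k in \<open>auto simp: mat_delete_def mat_of_cols_def nth_append\<close>)
    moreover have "?N $$ (i, k-1) = v $ i" using i lW k by (simp add: mat_of_cols_def nth_append)
    ultimately show "?N $$ (i, k-1) * cofactor ?N i (k-1) = v $ i * cofactor N0 i (k-1)"
      unfolding cofactor_def by simp
  qed
  finally show "det_cols k (W @ [v]) = (\<Sum>i<k. v $ i * cofactor N0 i (k-1))"
    unfolding det_cols_def .
qed

lemma grassmann_pluecker:
  fixes W U :: "'a :: idom vec list"
  assumes k: "k \<ge> 1" and lW: "length W = k - 1" and lU: "length U = k + 1"
    and cU: "set U \<subseteq> carrier_vec k"
  shows "(\<Sum>j<k+1. (-1)^j * det_cols k (W @ [U!j]) * det_cols k (take j U @ drop (Suc j) U)) = 0"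
proof -
  obtain c where linear: "\<And>v. v \<in> carrier_vec k \<Longrightarrow> det_cols k (W @ [v]) = (\<Sum>i<k. v $ i * c i)"
    using det_cols_append_linear[OF k lW] by blast
  txt \<open>The first row of M, the minors det_cols k (W @ [U!j]), is by linearity a combination
    of the rows below it, the columns U!j; expanding det M = 0 along it gives the relation.\<close>
  define M where "M = mat (k+1) (k+1) (\<lambda>(i,j). if i = 0 then det_cols k (W @ [U!j]) else (U!j) $ (i-1))"
  have M: "M \<in> carrier_mat (k+1) (k+1)" unfolding M_def by simp
  define v where "v = vec (k+1) (\<lambda>i. if i = 0 then 1 else - c (i-1))"
  have "transpose_mat M *\<^sub>v v = 0\<^sub>v (k+1)"
  proof (rule eq_vecI)
    fix j assume "j < dim_vec (0\<^sub>v (k+1) :: 'a vec)"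
    hence j: "j < k+1" by simp
    have Uj: "U ! j \<in> carrier_vec k" using cU j lU nth_mem[of j U] by auto
    have "(transpose_mat M *\<^sub>v v) $ j = (\<Sum>i<k+1. M $$ (i,j) * v $ i)"
      using j M by (simp add: scalar_prod_def v_def lessThan_atLeast0 ac_simps)
    also have "\<dots> = M $$ (0,j) * v $ 0 + (\<Sum>i<k. M $$ (Suc i, j) * v $ (Suc i))"
      using sum.lessThan_Suc_shift[of "\<lambda>i. M $$ (i,j) * v $ i" k] by simp
    also have "\<dots> = det_cols k (W @ [U!j]) - (\<Sum>i<k. (U!j) $ i * c i)"
      using j by (simp add: M_def v_def sum_negf)
    also have "\<dots> = 0" using linear[OF Uj] by simp
    finally show "(transpose_mat M *\<^sub>v v) $ j = 0\<^sub>v (k+1) $ j" using j by simp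
  qed (use M in simp)
  moreover have "v \<in> carrier_vec (k+1)" "v \<noteq> 0\<^sub>v (k+1)"
    unfolding v_def by (auto simp: vec_eq_iff intro!: exI[of _ 0])
  ultimately have "det (transpose_mat M) = 0"
    using det_0_iff_vec_prod_zero[of "transpose_mat M"] M by auto
  hence "det M = 0" using det_transpose[OF M] by simp
  moreover have "det M = (\<Sum>j<k+1. M $$ (0,j) * cofactor M 0 j)"
    by (rule laplace_expansion_row[OF M]) simp
  moreover have "M $$ (0,j) * cofactor M 0 j =
      (-1)^j * det_cols k (W @ [U!j]) * det_cols k (take j U @ drop (Suc j) U)" if j: "j < k+1" for j
  proof -
    have "mat_delete M 0 j = mat_of_cols k (take j U @ drop (Suc j) U)"
    proof (rule eq_matI)
      fix i' j' assume "i' < dim_row (mat_of_cols k (take j U @ drop (Suc j) U))"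
        and "j' < dim_col (mat_of_cols k (take j U @ drop (Suc j) U))"
      hence i': "i' < k" and j': "j' < k" using lU j by auto
      have "(take j U @ drop (Suc j) U) ! j' = U ! (if j' < j then j' else Suc j')"
        using j j' lU by (auto simp: nth_append min_def)
      thus "mat_delete M 0 j $$ (i', j') = mat_of_cols k (take j U @ drop (Suc j) U) $$ (i', j')"
        using M i' j' j lU by (auto simp: mat_delete_def M_def mat_of_cols_def)
    qed (use M lU j in auto)
    thus ?thesis using j by (simp add: M_def cofactor_def det_cols_def)
  qed
  ultimately show ?thesis by simp
qed

lemma sorted_list_of_set_remove_nth:
  fixes I :: "nat set"
  assumes "finite I" "j < card I"
  shows "take j (sorted_list_of_set I) @ drop (Suc j) (sorted_list_of_set I) =
         sorted_list_of_set (I - {sorted_list_of_set I ! j})"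
proof -
  let ?L = "sorted_list_of_set I"
  let ?R = "take j ?L @ drop (Suc j) ?L"
  have "j < length ?L" using assms by simp
  hence L: "?L = take j ?L @ ?L ! j # drop (Suc j) ?L" by (rule id_take_nth_drop)
  have "sorted_wrt (<) (take j ?L @ ?L ! j # drop (Suc j) ?L)" by (simp only: L[symmetric]) simp
  hence "sorted_wrt (<) ?R" by (auto simp: sorted_wrt_append)
  hence "sorted_list_of_set (set ?R) = ?R"
    using strict_sorted_equal[of "sorted_list_of_set (set ?R)" ?R] by simp
  moreover have "distinct (take j ?L @ ?L ! j # drop (Suc j) ?L)" by (simp only: L[symmetric]) simp
  hence "set ?R = I - {?L ! j}"
    using arg_cong[where f=set, OF L] assms(1) by auto
  ultimately show ?thesis by simp
qed

lemma list_minor_three_term: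
  fixes A :: "'a :: idom mat"
  assumes A: "A \<in> carrier_mat k n" and L: "length L + 2 = k"
  shows "list_minor A k (L @ [a, b]) * list_minor A k (L @ [c, d])
      - list_minor A k (L @ [a, c]) * list_minor A k (L @ [b, d])
      + list_minor A k (L @ [a, d]) * list_minor A k (L @ [b, c]) = 0"
proof -
  define p where "p = length L"
  define W where "W = map (col A) (L @ [a])"
  define U where "U = map (col A) (L @ [b, c, d])"
  define t where "t j = (-1)^j * det_cols k (W @ [U!j]) * det_cols k (take j U @ drop (Suc j) U)" for j
  have "(\<Sum>j<k+1. t j) = 0" unfolding t_def
    by (rule grassmann_pluecker) (use L col_carrier_vec[OF A] in \<open>auto simp: W_def U_def\<close>)
  moreover have "(\<Sum>j<k+1. t j) = (\<Sum>j<p. t j) + t p + t (Suc p) + t (Suc (Suc p))"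
  proof -
    have "k + 1 = Suc (Suc (Suc p))" using L p_def by simp
    thus ?thesis by simp
  qed
  moreover have "t j = 0" if "j < p" for j
  proof -
    have "U ! j \<in> set W" using that by (simp add: W_def U_def p_def nth_append)
    hence "det_cols k (W @ [U!j]) = 0"
      by (rule det_cols_repeated[rotated 2])
        (use that L col_carrier_vec[OF A] in \<open>auto simp: W_def U_def p_def nth_append\<close>)
    thus ?thesis unfolding t_def by simp
  qed
  moreover have "t p = (-1)^p * list_minor A k (L @ [a, b]) * list_minor A k (L @ [c, d])"
    "t (Suc p) = - ((-1)^p * list_minor A k (L @ [a, c]) * list_minor A k (L @ [b, d]))"
    "t (Suc (Suc p)) = (-1)^p * list_minor A k (L @ [a, d]) * list_minor A k (L @ [b, c])"
    unfolding t_def list_minor_def W_def U_def p_def by (simp_all add: nth_append)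
  ultimately have "(-1)^p * (list_minor A k (L @ [a, b]) * list_minor A k (L @ [c, d])
      - list_minor A k (L @ [a, c]) * list_minor A k (L @ [b, d])
      + list_minor A k (L @ [a, d]) * list_minor A k (L @ [b, c])) = 0"
    by (simp add: algebra_simps)
  thus ?thesis by simp
qed

lemma three_term_pluecker:
  fixes A :: "'a :: idom mat"
  assumes A: "A \<in> carrier_mat k n" and S: "finite S" "card S + 2 = k"
    and abcd: "a < b" "b < c" "c < d" and notin: "a \<notin> S" "b \<notin> S" "c \<notin> S" "d \<notin> S"
  shows "set_minor A k (insert a (insert c S)) * set_minor A k (insert b (insert d S)) =
         set_minor A k (insert a (insert b S)) * set_minor A k (insert c (insert d S)) +
         set_minor A k (insert a (insert d S)) * set_minor A k (insert b (insert c S))"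
proof -
  let ?L = "sorted_list_of_set S"
  have relation: "list_minor A k (?L @ [a, b]) * list_minor A k (?L @ [c, d])
      - list_minor A k (?L @ [a, c]) * list_minor A k (?L @ [b, d])
      + list_minor A k (?L @ [a, d]) * list_minor A k (?L @ [b, c]) = 0"
    by (rule list_minor_three_term[OF A]) (use S in simp)
  define s where "s z = (-1::'a)^(card {x\<in>S. z < x})" for z
  have sorted_minor: "list_minor A k (?L @ [x, y]) = s x * s y * set_minor A k (insert x (insert y S))"
    if "x < y" "x \<notin> S" "y \<notin> S" for x y
    using list_minor_sorted_insert_pair[OF A S(1) that(2,3) S(2) that(1)]
    unfolding s_def set_minor_def by (simp add: power_add)
  txt \<open>Each of the six products of two list minors carries the same sign s a * s b * s c * s d.\<close>
  define \<sigma> where "\<sigma> = s a * s b * s c * s d"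
  have "\<sigma> * (set_minor A k (insert a (insert b S)) * set_minor A k (insert c (insert d S)) -
         set_minor A k (insert a (insert c S)) * set_minor A k (insert b (insert d S)) +
         set_minor A k (insert a (insert d S)) * set_minor A k (insert b (insert c S))) = 0"
    using relation abcd notin unfolding \<sigma>_def
    by (simp add: sorted_minor algebra_simps)
  hence "\<sigma> * (set_minor A k (insert a (insert c S)) * set_minor A k (insert b (insert d S))) =
      \<sigma> * (set_minor A k (insert a (insert b S)) * set_minor A k (insert c (insert d S)) +
         set_minor A k (insert a (insert d S)) * set_minor A k (insert b (insert c S)))"
    by (simp add: algebra_simps)
  moreover have "\<sigma> \<noteq> 0" unfolding \<sigma>_def s_def by simp
  ultimately show ?thesis by simp
qed

lemma grassmann_pluecker_minors:
  fixes A :: "'a :: idom mat"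
  assumes A: "A \<in> carrier_mat k n" and I: "finite I" "card I = k + 1" and V: "length V + 1 = k"
  shows "(\<Sum>j<k+1. (-1)^j * list_minor A k (V @ [sorted_list_of_set I ! j]) *
            set_minor A k (I - {sorted_list_of_set I ! j})) = 0"
proof -
  let ?L = "sorted_list_of_set I"
  have "(\<Sum>j<k+1. (-1)^j * det_cols k (map (col A) V @ [map (col A) ?L ! j]) *
      det_cols k (take j (map (col A) ?L) @ drop (Suc j) (map (col A) ?L))) = 0"
    by (rule grassmann_pluecker) (use I V col_carrier_vec[OF A] in auto)
  moreover have "take j (map (col A) ?L) @ drop (Suc j) (map (col A) ?L) =
      map (col A) (sorted_list_of_set (I - {?L ! j}))" if "j < k + 1" for j
    using arg_cong[where f="map (col A)", OF sorted_list_of_set_remove_nth[OF I(1), of j]] that I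
    by (simp add: take_map drop_map)
  ultimately show ?thesis unfolding set_minor_def list_minor_def using I by simp
qed

text \<open>In the Grassmann-Pluecker relation for the columns B2 - {x} and insert x B1 the term of x
  is nonzero, so the term of some other u is nonzero too.\<close>
lemma set_minor_symmetric_exchange:
  fixes A :: "'a :: idom mat"
  assumes A: "A \<in> carrier_mat k n"
    and B1: "finite B1" "card B1 = k" "set_minor A k B1 \<noteq> 0"
    and B2: "finite B2" "card B2 = k" "set_minor A k B2 \<noteq> 0"
    and x: "x \<in> B2" "x \<notin> B1"
  shows "\<exists>u\<in>B1 - B2. set_minor A k (insert x (B1 - {u})) \<noteq> 0 \<and>
                      set_minor A k (insert u (B2 - {x})) \<noteq> 0"
proof -
  let ?I = "insert x B1"
  let ?L = "sorted_list_of_set ?I"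
  let ?V = "sorted_list_of_set (B2 - {x})"
  have "k \<ge> 1" using B2 x by (auto simp: Suc_le_eq card_gt_0_iff)
  hence cV: "card (B2 - {x}) + 1 = k" using B2 x by simp
  define t where "t j = (-1)^j * list_minor A k (?V @ [?L ! j]) * set_minor A k (?I - {?L ! j})" for j
  have sum_t: "(\<Sum>j<k+1. t j) = 0"
    unfolding t_def by (rule grassmann_pluecker_minors[OF A]) (use B1 x cV in auto)
  have lL: "length ?L = k + 1" using B1 x by simp
  have setL: "set ?L = ?I" by (rule set_sorted_list_of_set) (use B1 in simp)
  with lL obtain j0 where j0: "j0 < k+1" "?L ! j0 = x" by (metis in_set_conv_nth insertI1)
  have "t j0 \<noteq> 0"
  proof -
    have "set_minor A k B2 = (-1)^(card {s\<in>B2 - {x}. x < s}) * list_minor A k (?V @ [x])"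
      using list_minor_sorted_insert[OF A, of "B2 - {x}" x] B2 cV x
      unfolding set_minor_def by (simp add: insert_absorb)
    moreover have "?I - {x} = B1" using x by auto
    ultimately show ?thesis unfolding t_def using j0 B1 B2 by auto
  qed
  moreover have "(\<Sum>j<k+1. t j) = t j0 + (\<Sum>j\<in>{..<k+1} - {j0}. t j)"
    by (rule sum.remove) (use j0 in auto)
  ultimately have "(\<Sum>j\<in>{..<k+1} - {j0}. t j) \<noteq> 0" using sum_t by auto
  then obtain j where j: "j \<in> {..<k+1} - {j0}" "t j \<noteq> 0" by (rule sum.not_neutral_contains_not_neutral)
  let ?u = "?L ! j"
  have "j < k + 1" "j \<noteq> j0" using j(1) by auto
  hence "?u \<noteq> x" using j0 lL nth_eq_iff_index_eq[of ?L j j0] by auto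
  moreover have "?u \<in> ?I" using \<open>j < k + 1\<close> lL setL nth_mem[of j ?L] by auto
  ultimately have u: "?u \<in> B1" by simp
  have minor_u: "list_minor A k (?V @ [?u]) \<noteq> 0" "set_minor A k (?I - {?u}) \<noteq> 0"
    using j(2) unfolding t_def by auto
  have "?u \<notin> B2"
    using list_minor_repeated[OF A, of ?V ?u] minor_u(1) cV B2 \<open>?u \<noteq> x\<close> by auto
  moreover have "set_minor A k (insert ?u (B2 - {x})) \<noteq> 0"
    using list_minor_sorted_insert[OF A, of "B2 - {x}" ?u] B2 cV minor_u \<open>?u \<notin> B2\<close>
    unfolding set_minor_def by simp
  moreover have "?I - {?u} = insert x (B1 - {?u})" using \<open>?u \<noteq> x\<close> by auto
  ultimately show ?thesis using u minor_u by auto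
qed

lemma (in vec_space) full_rank_ex_nonzero_minor:
  assumes A: "A \<in> carrier_mat n nc" and r: "rank A = n"
  shows "\<exists>I \<subseteq> {..<nc}. card I = n \<and> set_minor A n I \<noteq> 0"
proof -
  obtain S where S: "maximal S (\<lambda>T. T \<subseteq> set (cols A) \<and> lin_indpt T)"
    using maximal_exists[of "(\<lambda>T. T \<subseteq> set (cols A) \<and> lin_indpt T)" "card (set (cols A))" "{}"]
    by (meson List.finite_set card_mono empty_iff empty_subsetI finite_lin_indpt2 rev_finite_subset)
  have cS: "card S = n" using rank_card_indpt[OF A S] r by simp
  have SA: "S \<subseteq> set (cols A)" and li: "lin_indpt S" using S unfolding maximal_def by auto
  define f where "f v = (SOME j. j < nc \<and> col A j = v)" for v
  have f: "f v < nc \<and> col A (f v) = v" if "v \<in> S" for v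
  proof -
    have "v \<in> col A ` {0..<nc}" using SA that A by (auto simp: cols_def)
    hence "\<exists>j. j < nc \<and> col A j = v" by auto
    thus ?thesis unfolding f_def by (rule someI_ex)
  qed
  define I where "I = f ` S"
  have "inj_on f S" by (rule inj_onI) (metis f)
  hence cI: "card I = n" unfolding I_def using cS by (simp add: card_image)
  have In: "I \<subseteq> {..<nc}" unfolding I_def using f by auto
  hence finI: "finite I" using finite_subset by blast
  define L where "L = map (col A) (sorted_list_of_set I)"
  have setL: "set L = S" unfolding L_def I_def using finI f by (auto simp: I_def image_iff)
  have "inj_on (col A) I" unfolding I_def by (rule inj_onI) (auto simp: f)
  hence dL: "distinct L" unfolding L_def using finI by (simp add: distinct_map)
  have lL: "length L = n" unfolding L_def using cI by simp
  have Lc: "set L \<subseteq> carrier_vec n" using setL SA A by (auto simp: cols_def)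
  let ?C = "mat_of_cols n L"
  have C: "?C \<in> carrier_mat n n" using lL by auto
  have "rank ?C = n" by (rule lin_indpt_full_rank[OF C]) (use Lc dL li setL in auto)
  hence "det ?C \<noteq> 0" using det_rank_iff[OF C] by simp
  thus ?thesis using In cI unfolding L_def set_minor_def list_minor_def det_cols_def by blast
qed

section \<open>Bases with the symmetric exchange property\<close>

lemma card_exchange:
  assumes "finite I" "x \<in> I" "u \<notin> I"
  shows "card (insert u (I - {x})) = card I"
proof -
  have "card (insert u (I - {x})) = Suc (card (I - {x}))" using assms by simp
  also have "\<dots> = card I" by (rule card_Suc_Diff1) (use assms in auto)
  finally show ?thesis .
qed

definition strong_exchange_bases :: "'a set \<Rightarrow> 'a set set \<Rightarrow> bool" where
  "strong_exchange_bases E Bs \<longleftrightarrow> finite E \<and> Bs \<noteq> {} \<and> (\<forall>B\<in>Bs. B \<subseteq> E) \<and>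
     (\<forall>B1\<in>Bs. \<forall>B2\<in>Bs. \<forall>x\<in>B2 - B1. \<exists>u\<in>B1 - B2. insert x (B1 - {u}) \<in> Bs \<and> insert u (B2 - {x}) \<in> Bs)"

lemma strong_exchange_basesD:
  assumes "strong_exchange_bases E Bs"
  shows "finite E" "Bs \<noteq> {}" "B \<in> Bs \<Longrightarrow> B \<subseteq> E" "B \<in> Bs \<Longrightarrow> finite B"
    "\<lbrakk>B1 \<in> Bs; B2 \<in> Bs; x \<in> B2; x \<notin> B1\<rbrakk> \<Longrightarrow> \<exists>u\<in>B1 - B2. insert x (B1 - {u}) \<in> Bs \<and> insert u (B2 - {x}) \<in> Bs"
proof -
  show "finite E" "Bs \<noteq> {}" using assms unfolding strong_exchange_bases_def by auto
  show "B \<in> Bs \<Longrightarrow> B \<subseteq> E" using assms unfolding strong_exchange_bases_def by auto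
  show "B \<in> Bs \<Longrightarrow> finite B" using assms unfolding strong_exchange_bases_def by (meson finite_subset)
  have ex: "\<forall>B1\<in>Bs. \<forall>B2\<in>Bs. \<forall>x\<in>B2 - B1. \<exists>u\<in>B1 - B2. insert x (B1 - {u}) \<in> Bs \<and> insert u (B2 - {x}) \<in> Bs"
    using assms unfolding strong_exchange_bases_def by (elim conjE) assumption
  show "\<lbrakk>B1 \<in> Bs; B2 \<in> Bs; x \<in> B2; x \<notin> B1\<rbrakk> \<Longrightarrow> \<exists>u\<in>B1 - B2. insert x (B1 - {u}) \<in> Bs \<and> insert u (B2 - {x}) \<in> Bs"
    using ex[rule_format, of B1 B2 x] by simp
qed

lemma strong_exchange_augment:
  assumes sb: "strong_exchange_bases E Bs" and B: "B \<in> Bs"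
  shows "B' \<in> Bs \<Longrightarrow> card (B \<inter> X) < card (B' \<inter> X) \<Longrightarrow> \<exists>C\<in>Bs. B \<inter> X \<subset> C \<inter> X"
proof (induction "card (B' - B)" arbitrary: B' rule: less_induct)
  case less
  have fB: "finite B" "finite B'" using strong_exchange_basesD(4)[OF sb] B less.prems by auto
  have "\<not> B' \<inter> X \<subseteq> B \<inter> X"
  proof
    assume "B' \<inter> X \<subseteq> B \<inter> X"
    hence "card (B' \<inter> X) \<le> card (B \<inter> X)" using fB by (intro card_mono) auto
    thus False using less.prems by simp
  qed
  then obtain x where x: "x \<in> B'" "x \<in> X" "x \<notin> B" by auto
  obtain u where u: "u \<in> B" "u \<notin> B'" "insert x (B - {u}) \<in> Bs" "insert u (B' - {x}) \<in> Bs"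
    using strong_exchange_basesD(5)[OF sb B less.prems(1) x(1) x(3)] by auto
  show ?case
  proof (cases "u \<in> X")
    case False
    have "B \<inter> X \<subset> insert x (B - {u}) \<inter> X" using x u False by auto
    thus ?thesis using u(3) by blast
  next
    case True
    let ?B'' = "insert u (B' - {x})"
    have c1: "?B'' - B = (B' - B) - {x}" using u x by auto
    have "card (?B'' - B) < card (B' - B)" unfolding c1 using x fB
      by (intro psubset_card_mono) auto
    moreover have "card (?B'' \<inter> X) = card (B' \<inter> X)"
    proof -
      have "?B'' \<inter> X = insert u ((B' \<inter> X) - {x})" using True by auto
      moreover have "u \<notin> (B' \<inter> X) - {x}" using u by auto
      ultimately have "card (?B'' \<inter> X) = Suc (card ((B' \<inter> X) - {x}))" using fB by simp
      also have "\<dots> = card (B' \<inter> X)" by (rule card_Suc_Diff1) (use x fB in auto)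
      finally show ?thesis .
    qed
    ultimately show ?thesis using less.hyps[of ?B''] u(4) less.prems(2) by simp
  qed
qed

lemma restr_bases_iff_max_card:
  assumes sb: "strong_exchange_bases E Bs"
  shows "I \<in> restr_bases Bs X \<longleftrightarrow> (\<exists>B\<in>Bs. I = B \<inter> X \<and> (\<forall>B'\<in>Bs. card (B' \<inter> X) \<le> card (B \<inter> X)))"
proof
  assume "I \<in> restr_bases Bs X"
  then obtain B where B: "B \<in> Bs" "I = B \<inter> X" and nm: "\<not> (\<exists>B\<in>Bs. I \<subset> B \<inter> X)"
    unfolding restr_bases_def by auto
  have "\<forall>B'\<in>Bs. card (B' \<inter> X) \<le> card (B \<inter> X)"
  proof (rule ccontr)
    assume "\<not> ?thesis"
    then obtain B' where "B' \<in> Bs" "card (B \<inter> X) < card (B' \<inter> X)" by force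
    from strong_exchange_augment[OF sb B(1) this] nm B(2) show False by blast
  qed
  thus "\<exists>B\<in>Bs. I = B \<inter> X \<and> (\<forall>B'\<in>Bs. card (B' \<inter> X) \<le> card (B \<inter> X))" using B by blast
next
  assume "\<exists>B\<in>Bs. I = B \<inter> X \<and> (\<forall>B'\<in>Bs. card (B' \<inter> X) \<le> card (B \<inter> X))"
  then obtain B where B: "B \<in> Bs" "I = B \<inter> X" and mx: "\<forall>B'\<in>Bs. card (B' \<inter> X) \<le> card (B \<inter> X)" by blast
  have "\<not> (\<exists>B'\<in>Bs. I \<subset> B' \<inter> X)"
  proof
    assume "\<exists>B'\<in>Bs. I \<subset> B' \<inter> X"
    then obtain B' where "B' \<in> Bs" "I \<subset> B' \<inter> X" by blast
    moreover have "finite B'" using strong_exchange_basesD(4)[OF sb] \<open>B' \<in> Bs\<close> by simp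
    ultimately have "card I < card (B' \<inter> X)" by (intro psubset_card_mono) auto
    thus False using mx \<open>B' \<in> Bs\<close> B(2) by fastforce
  qed
  thus "I \<in> restr_bases Bs X" unfolding restr_bases_def using B by blast
qed

lemma card_inter_le_restr_basis:
  assumes "strong_exchange_bases E Bs" "I \<in> restr_bases Bs X" "B \<in> Bs"
  shows "card (B \<inter> X) \<le> card I"
proof -
  obtain B0 where "I = B0 \<inter> X" "\<forall>B'\<in>Bs. card (B' \<inter> X) \<le> card (B0 \<inter> X)"
    using assms(2) restr_bases_iff_max_card[OF assms(1)] by blast
  thus ?thesis using assms(3) by simp
qed

lemma restr_basisI_card:
  assumes sb: "strong_exchange_bases E Bs" and I: "I \<in> restr_bases Bs X" and B: "B \<in> Bs"
    and card: "card (B \<inter> X) = card I"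
  shows "B \<inter> X \<in> restr_bases Bs X"
proof -
  obtain B0 where "B0 \<in> Bs" "I = B0 \<inter> X" "\<forall>B'\<in>Bs. card (B' \<inter> X) \<le> card (B0 \<inter> X)"
    using I restr_bases_iff_max_card[OF sb] by blast
  thus ?thesis unfolding restr_bases_iff_max_card[OF sb] using B card by auto
qed

lemma ex_basis_inter_restr_basis:
  assumes sb: "strong_exchange_bases E Bs"
  shows "\<exists>B\<in>Bs. B \<inter> X \<in> restr_bases Bs X"
proof -
  obtain B0 where B0: "B0 \<in> Bs" using strong_exchange_basesD(2)[OF sb] by blast
  have bnd: "\<forall>B\<in>Bs. card (B \<inter> X) \<le> card E"
  proof
    fix B assume "B \<in> Bs"
    hence "B \<inter> X \<subseteq> E" using strong_exchange_basesD(3)[OF sb] by blast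
    thus "card (B \<inter> X) \<le> card E" using strong_exchange_basesD(1)[OF sb] by (rule card_mono[rotated])
  qed
  have bnd2: "\<forall>B. B \<in> Bs \<longrightarrow> card (B \<inter> X) < Suc (card E)" using bnd by (simp add: less_Suc_eq_le)
  obtain B where "B \<in> Bs" "\<forall>B'. B' \<in> Bs \<longrightarrow> card (B' \<inter> X) \<le> card (B \<inter> X)"
    using Lattices_Big.ex_has_greatest_nat[of "\<lambda>B. B \<in> Bs", OF B0 bnd2] by blast
  hence "B \<inter> X \<in> restr_bases Bs X" unfolding restr_bases_iff_max_card[OF sb] by blast
  thus ?thesis using \<open>B \<in> Bs\<close> by blast
qed

lemma contr_basesI: "B \<in> Bs \<Longrightarrow> B \<inter> X \<in> restr_bases Bs X \<Longrightarrow> B - X \<in> contr_bases Bs X"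
  unfolding contr_bases_def by blast

lemma contr_basesD: "K \<in> contr_bases Bs X \<Longrightarrow> \<exists>B. K = B - X \<and> B \<in> Bs \<and> B \<inter> X \<in> restr_bases Bs X"
  unfolding contr_bases_def by blast

lemma matroid_bases_restr:
  assumes sb: "strong_exchange_bases E Bs" and XE: "X \<subseteq> E"
  shows "matroid_bases X (restr_bases Bs X)"
  unfolding matroid_bases_def
proof (intro conjI ballI)
  show "finite X" using strong_exchange_basesD(1)[OF sb] XE finite_subset by blast
  show "restr_bases Bs X \<noteq> {}" using ex_basis_inter_restr_basis[OF sb] by blast
  fix I assume "I \<in> restr_bases Bs X"
  thus "I \<subseteq> X" unfolding restr_bases_def by auto
next
  fix I1 I2 x assume I1: "I1 \<in> restr_bases Bs X" and I2: "I2 \<in> restr_bases Bs X" and x: "x \<in> I1 - I2"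
  obtain B1 where B1: "B1 \<in> Bs" "I1 = B1 \<inter> X" using I1 restr_bases_iff_max_card[OF sb] by blast
  obtain B2 where B2: "B2 \<in> Bs" "I2 = B2 \<inter> X" using I2 restr_bases_iff_max_card[OF sb] by blast
  have fB: "finite B1" "finite B2" using strong_exchange_basesD(4)[OF sb] B1 B2 by auto
  have xB: "x \<in> B1" "x \<notin> B2" "x \<in> X" using x B1 B2 by auto
  obtain u where u: "u \<in> B2" "u \<notin> B1" "insert x (B2 - {u}) \<in> Bs" "insert u (B1 - {x}) \<in> Bs"
    using strong_exchange_basesD(5)[OF sb B2(1) B1(1) xB(1) xB(2)] by auto
  have uX: "u \<in> X"
  proof (rule ccontr)
    assume "u \<notin> X"
    hence "insert x (B2 - {u}) \<inter> X = insert x I2" using B2 xB by auto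
    moreover have "card (insert x I2) = Suc (card I2)" using fB B2 x by simp
    ultimately show False using card_inter_le_restr_basis[OF sb I2 u(3)] by simp
  qed
  have e: "insert u (B1 - {x}) \<inter> X = insert u (I1 - {x})" using B1 uX by auto
  have "card (insert u (I1 - {x})) = card I1" by (rule card_exchange) (use fB B1 x u in auto)
  hence "insert u (I1 - {x}) \<in> restr_bases Bs X" using restr_basisI_card[OF sb I1 u(4)] e by simp
  moreover have "u \<in> I2 - I1" using u uX B1 B2 by auto
  ultimately show "\<exists>y\<in>I2 - I1. insert y (I1 - {x}) \<in> restr_bases Bs X" by blast
qed

lemma matroid_bases_contr:
  assumes sb: "strong_exchange_bases E Bs" and XE: "X \<subseteq> E"
  shows "matroid_bases (E - X) (contr_bases Bs X)"
  unfolding matroid_bases_def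
proof (intro conjI ballI)
  show "finite (E - X)" using strong_exchange_basesD(1)[OF sb] by simp
  obtain B where "B \<in> Bs" "B \<inter> X \<in> restr_bases Bs X" using ex_basis_inter_restr_basis[OF sb, of X] by blast
  hence "B - X \<in> contr_bases Bs X" by (rule contr_basesI)
  thus "contr_bases Bs X \<noteq> {}" by auto
  fix K assume "K \<in> contr_bases Bs X"
  then obtain B where "K = B - X" "B \<in> Bs" using contr_basesD by blast
  thus "K \<subseteq> E - X" using strong_exchange_basesD(3)[OF sb] by blast
next
  fix K1 K2 x assume K1: "K1 \<in> contr_bases Bs X" and K2: "K2 \<in> contr_bases Bs X" and x: "x \<in> K1 - K2"
  obtain B1 where B1: "B1 \<in> Bs" "K1 = B1 - X" "B1 \<inter> X \<in> restr_bases Bs X" using contr_basesD[OF K1] by blast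
  obtain B2 where B2: "B2 \<in> Bs" "K2 = B2 - X" "B2 \<inter> X \<in> restr_bases Bs X" using contr_basesD[OF K2] by blast
  have fB: "finite B1" "finite B2" using strong_exchange_basesD(4)[OF sb] B1 B2 by auto
  have xB: "x \<in> B1" "x \<notin> B2" "x \<notin> X" using x B1 B2 by auto
  obtain u where u: "u \<in> B2" "u \<notin> B1" "insert x (B2 - {u}) \<in> Bs" "insert u (B1 - {x}) \<in> Bs"
    using strong_exchange_basesD(5)[OF sb B2(1) B1(1) xB(1) xB(2)] by auto
  have uX: "u \<notin> X"
  proof
    assume "u \<in> X"
    hence "insert u (B1 - {x}) \<inter> X = insert u (B1 \<inter> X)" using xB by auto
    moreover have "card (insert u (B1 \<inter> X)) = Suc (card (B1 \<inter> X))" using fB u by simp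
    ultimately show False using card_inter_le_restr_basis[OF sb B1(3) u(4)] by simp
  qed
  have "insert u (B1 - {x}) \<inter> X = B1 \<inter> X" using uX xB by auto
  hence "insert u (B1 - {x}) - X \<in> contr_bases Bs X" using u(4) B1(3) contr_basesI by metis
  moreover have "insert u (B1 - {x}) - X = insert u (K1 - {x})" using B1 uX by auto
  moreover have "u \<in> K2 - K1" using u uX B1 B2 by auto
  ultimately show "\<exists>y\<in>K2 - K1. insert y (K1 - {x}) \<in> contr_bases Bs X" by metis
qed

lemma union_restr_basis_contr_part:
  assumes sb: "strong_exchange_bases E Bs" and J: "J \<in> restr_bases Bs X"
  shows "B0 \<in> Bs \<Longrightarrow> B0 \<inter> X \<in> restr_bases Bs X \<Longrightarrow> J \<union> (B0 - X) \<in> Bs"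
proof (induction "card (B0 \<inter> X - J)" arbitrary: B0 rule: less_induct)
  case less
  obtain B2 where B2: "B2 \<in> Bs" "J = B2 \<inter> X" using J restr_bases_iff_max_card[OF sb] by blast
  have fB: "finite B0" "finite B2" using strong_exchange_basesD(4)[OF sb] B2 less.prems by auto
  show ?case
  proof (cases "B0 \<inter> X \<subseteq> J")
    case True
    have "card J \<le> card (B0 \<inter> X)" using card_inter_le_restr_basis[OF sb less.prems(2) B2(1)] B2 by simp
    hence "B0 \<inter> X = J" using True fB B2 by (intro card_seteq) auto
    hence "J \<union> (B0 - X) = B0" by auto
    thus ?thesis using less.prems by simp
  next
    case False
    then obtain z where z: "z \<in> B0" "z \<in> X" "z \<notin> J" by auto
    hence zB2: "z \<notin> B2" using B2 by auto
    obtain u where u: "u \<in> B2" "u \<notin> B0" "insert z (B2 - {u}) \<in> Bs" "insert u (B0 - {z}) \<in> Bs"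
      using strong_exchange_basesD(5)[OF sb B2(1) less.prems(1) z(1) zB2] by auto
    have uX: "u \<in> X"
    proof (rule ccontr)
      assume "u \<notin> X"
      hence "insert z (B2 - {u}) \<inter> X = insert z J" using B2 z by auto
      moreover have "card (insert z J) = Suc (card J)" using fB B2 z by simp
      ultimately show False using card_inter_le_restr_basis[OF sb J u(3)] by simp
    qed
    let ?B = "insert u (B0 - {z})"
    have e: "?B \<inter> X = insert u (B0 \<inter> X - {z})" using uX by auto
    have "card (insert u (B0 \<inter> X - {z})) = card (B0 \<inter> X)" by (rule card_exchange) (use fB z u in auto)
    hence rb: "?B \<inter> X \<in> restr_bases Bs X" using restr_basisI_card[OF sb less.prems(2) u(4)] e by simp
    have "?B \<inter> X - J = (B0 \<inter> X - J) - {z}" using e uX B2 u by auto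
    hence "card (?B \<inter> X - J) < card (B0 \<inter> X - J)" using z fB by (intro psubset_card_mono) auto
    hence "J \<union> (?B - X) \<in> Bs" using less.hyps u(4) rb by blast
    moreover have "?B - X = B0 - X" using uX z by auto
    ultimately show ?thesis by simp
  qed
qed

section \<open>Connectivity and basis exchange\<close>

definition exchangeable :: "'a set set \<Rightarrow> 'a \<Rightarrow> 'a \<Rightarrow> bool" where
  "exchangeable Bm x y \<longleftrightarrow> (\<exists>B\<in>Bm. x \<in> B \<and> y \<notin> B \<and> insert y (B - {x}) \<in> Bm)"

lemma exchangeable_sym: "exchangeable Bm x y \<Longrightarrow> exchangeable Bm y x"
  unfolding exchangeable_def
proof -
  assume "\<exists>B\<in>Bm. x \<in> B \<and> y \<notin> B \<and> insert y (B - {x}) \<in> Bm"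
  then obtain B where B: "B \<in> Bm" "x \<in> B" "y \<notin> B" "insert y (B - {x}) \<in> Bm" by blast
  have "insert x (insert y (B - {x}) - {y}) = B" using B by auto
  thus "\<exists>B\<in>Bm. y \<in> B \<and> x \<notin> B \<and> insert x (B - {y}) \<in> Bm"
    using B by (intro bexI[of _ "insert y (B - {x})"]) auto
qed

lemma matroid_basesD:
  assumes "matroid_bases E Bm"
  shows "finite E" "Bm \<noteq> {}" "B \<in> Bm \<Longrightarrow> B \<subseteq> E" "B \<in> Bm \<Longrightarrow> finite B"
    "\<lbrakk>B1 \<in> Bm; B2 \<in> Bm; x \<in> B1; x \<notin> B2\<rbrakk> \<Longrightarrow> \<exists>y\<in>B2 - B1. insert y (B1 - {x}) \<in> Bm"
proof -
  show "finite E" "Bm \<noteq> {}" using assms unfolding matroid_bases_def by auto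
  show "B \<in> Bm \<Longrightarrow> B \<subseteq> E" using assms unfolding matroid_bases_def by auto
  show "B \<in> Bm \<Longrightarrow> finite B" using assms unfolding matroid_bases_def by (meson finite_subset)
  have ex: "\<forall>B1\<in>Bm. \<forall>B2\<in>Bm. \<forall>x\<in>B1 - B2. \<exists>y\<in>B2 - B1. insert y (B1 - {x}) \<in> Bm"
    using assms unfolding matroid_bases_def by (elim conjE) assumption
  show "\<lbrakk>B1 \<in> Bm; B2 \<in> Bm; x \<in> B1; x \<notin> B2\<rbrakk> \<Longrightarrow> \<exists>y\<in>B2 - B1. insert y (B1 - {x}) \<in> Bm"
    using ex[rule_format, of B1 B2 x] by simp
qed

definition exchange_closed :: "'a set set \<Rightarrow> 'a set \<Rightarrow> bool" where
  "exchange_closed Bm G \<longleftrightarrow> (\<forall>z w. exchangeable Bm z w \<longrightarrow> (z \<in> G \<longleftrightarrow> w \<in> G))"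

lemma matroid_bases_exchangeableE:
  assumes mb: "matroid_bases E Bm" and J: "J \<in> Bm" "J' \<in> Bm" and x: "x \<in> J" "x \<notin> J'"
  obtains y where "y \<in> J'" "y \<notin> J" "insert y (J - {x}) \<in> Bm" "exchangeable Bm x y"
proof -
  obtain y where y: "y \<in> J' - J" "insert y (J - {x}) \<in> Bm" using matroid_basesD(5)[OF mb J x] by blast
  have "exchangeable Bm x y" unfolding exchangeable_def using J(1) x y by blast
  thus ?thesis using y that by blast
qed

lemma card_inter_exchange_closed:
  assumes mb: "matroid_bases E Bm" and G: "exchange_closed Bm G" and J': "J' \<in> Bm"
  shows "J \<in> Bm \<Longrightarrow> card (J \<inter> G) = card (J' \<inter> G)"
proof (induction "card (J - J')" arbitrary: J rule: less_induct)
  case less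
  have fJ: "finite J" "finite J'" using matroid_basesD(4)[OF mb] less.prems J' by auto
  show ?case
  proof (cases "J - J' = {}")
    case True
    have "J' - J = {}"
    proof (rule ccontr)
      assume "J' - J \<noteq> {}"
      then obtain x where "x \<in> J'" "x \<notin> J" by auto
      then obtain y where "y \<in> J" "y \<notin> J'" using matroid_basesD(5)[OF mb J' less.prems] by blast
      thus False using True by auto
    qed
    hence "J = J'" using True by auto
    thus ?thesis by simp
  next
    case False
    then obtain x where x: "x \<in> J" "x \<notin> J'" by auto
    obtain y where y: "y \<in> J'" "y \<notin> J" "insert y (J - {x}) \<in> Bm" "exchangeable Bm x y"
      using matroid_bases_exchangeableE[OF mb less.prems J' x] by blast
    let ?J1 = "insert y (J - {x})"
    have xy: "x \<in> G \<longleftrightarrow> y \<in> G" using G y(4) unfolding exchange_closed_def by blast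
    have "card (?J1 \<inter> G) = card (J \<inter> G)"
    proof (cases "x \<in> G")
      case True
      hence "?J1 \<inter> G = insert y (J \<inter> G - {x})" using xy by auto
      moreover have "card (insert y (J \<inter> G - {x})) = card (J \<inter> G)"
        by (rule card_exchange) (use fJ x y True in auto)
      ultimately show ?thesis by simp
    next
      case False
      hence "?J1 \<inter> G = J \<inter> G" using xy by auto
      thus ?thesis by simp
    qed
    moreover have "card (?J1 - J') < card (J - J')"
    proof -
      have "?J1 - J' = (J - J') - {x}" using y x by auto
      thus ?thesis using x fJ by (intro psubset_card_mono) auto
    qed
    ultimately show ?thesis using less.hyps[of ?J1] y(3) by simp
  qed
qed

lemma exchange_closed_swap:
  assumes mb: "matroid_bases E Bm" and G: "exchange_closed Bm G" and J': "J' \<in> Bm"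
  shows "J \<in> Bm \<Longrightarrow> (J - G) \<union> (J' \<inter> G) \<in> Bm"
proof (induction "card (J \<inter> G - J')" arbitrary: J rule: less_induct)
  case less
  have fJ: "finite J" "finite J'" using matroid_basesD(4)[OF mb] less.prems J' by auto
  show ?case
  proof (cases "J \<inter> G \<subseteq> J'")
    case True
    have "card (J \<inter> G) = card (J' \<inter> G)" by (rule card_inter_exchange_closed[OF mb G J' less.prems])
    hence "J \<inter> G = J' \<inter> G" using True fJ by (intro card_seteq) auto
    hence "(J - G) \<union> (J' \<inter> G) = J" by auto
    thus ?thesis using less.prems by simp
  next
    case False
    then obtain e where e: "e \<in> J" "e \<in> G" "e \<notin> J'" by auto
    obtain y where y: "y \<in> J'" "y \<notin> J" "insert y (J - {e}) \<in> Bm" "exchangeable Bm e y"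
      using matroid_bases_exchangeableE[OF mb less.prems J' e(1) e(3)] by blast
    have yG: "y \<in> G" using G y(4) e(2) unfolding exchange_closed_def by blast
    let ?J1 = "insert y (J - {e})"
    have "?J1 \<inter> G - J' = (J \<inter> G - J') - {e}" using y yG e by auto
    hence "card (?J1 \<inter> G - J') < card (J \<inter> G - J')" using e fJ by (intro psubset_card_mono) auto
    hence "(?J1 - G) \<union> (J' \<inter> G) \<in> Bm" using less.hyps y(3) by blast
    moreover have "?J1 - G = J - G" using yG e by auto
    ultimately show ?thesis by simp
  qed
qed

lemma matroid_bases_inter_exchange_closed:
  assumes mb: "matroid_bases E Bm" and G: "exchange_closed Bm G" and GE: "G \<subseteq> E"
  shows "matroid_bases G ((\<lambda>J. J \<inter> G) ` Bm)"
  unfolding matroid_bases_def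
proof (intro conjI ballI)
  show "finite G" using matroid_basesD(1)[OF mb] GE finite_subset by blast
  show "(\<lambda>J. J \<inter> G) ` Bm \<noteq> {}" using matroid_basesD(2)[OF mb] by simp
  fix I assume "I \<in> (\<lambda>J. J \<inter> G) ` Bm"
  thus "I \<subseteq> G" by auto
next
  fix I1 I2 x assume I1: "I1 \<in> (\<lambda>J. J \<inter> G) ` Bm" and I2: "I2 \<in> (\<lambda>J. J \<inter> G) ` Bm" and x: "x \<in> I1 - I2"
  obtain J where J: "J \<in> Bm" "I1 = J \<inter> G" using I1 by blast
  obtain J' where J': "J' \<in> Bm" "I2 = J' \<inter> G" using I2 by blast
  have xJ: "x \<in> J" "x \<notin> J'" "x \<in> G" using x J J' by auto
  obtain y where y: "y \<in> J'" "y \<notin> J" "insert y (J - {x}) \<in> Bm" "exchangeable Bm x y"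
    using matroid_bases_exchangeableE[OF mb J(1) J'(1) xJ(1,2)] by blast
  have yG: "y \<in> G" using G y(4) xJ(3) unfolding exchange_closed_def by blast
  have "insert y (I1 - {x}) = insert y (J - {x}) \<inter> G" using J yG by auto
  hence "insert y (I1 - {x}) \<in> (\<lambda>J. J \<inter> G) ` Bm" using y(3) by blast
  moreover have "y \<in> I2 - I1" using y yG J J' by auto
  ultimately show "\<exists>y\<in>I2 - I1. insert y (I1 - {x}) \<in> (\<lambda>J. J \<inter> G) ` Bm" by blast
qed

lemma exchangeable_in_ground:
  assumes mb: "matroid_bases E Bm" and "exchangeable Bm z w"
  shows "z \<in> E" "w \<in> E"
proof -
  obtain B where B: "B \<in> Bm" "z \<in> B" "insert w (B - {z}) \<in> Bm"
    using assms(2) unfolding exchangeable_def by blast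
  thus "z \<in> E" "w \<in> E" using matroid_basesD(3)[OF mb] by blast+
qed

lemma exchange_closed_Diff:
  assumes "matroid_bases E Bm" "exchange_closed Bm F"
  shows "exchange_closed Bm (E - F)"
  unfolding exchange_closed_def
proof (intro allI impI)
  fix z w assume zw: "exchangeable Bm z w"
  have "z \<in> F \<longleftrightarrow> w \<in> F" using assms(2) zw unfolding exchange_closed_def by blast
  thus "z \<in> E - F \<longleftrightarrow> w \<in> E - F" using exchangeable_in_ground[OF assms(1) zw] by blast
qed

lemma exchange_closed_rtranclp_class:
  assumes mb: "matroid_bases E Bm"
  shows "exchange_closed Bm {z \<in> E. (exchangeable Bm)\<^sup>*\<^sup>* x z}"
  unfolding exchange_closed_def
proof (intro allI impI)
  fix z w assume zw: "exchangeable Bm z w"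
  have "(exchangeable Bm)\<^sup>*\<^sup>* x w" if "(exchangeable Bm)\<^sup>*\<^sup>* x z"
    using that zw by (rule rtranclp.rtrancl_into_rtrancl)
  moreover have "(exchangeable Bm)\<^sup>*\<^sup>* x z" if "(exchangeable Bm)\<^sup>*\<^sup>* x w"
    using that exchangeable_sym[OF zw] by (rule rtranclp.rtrancl_into_rtrancl)
  ultimately show "z \<in> {z \<in> E. (exchangeable Bm)\<^sup>*\<^sup>* x z} \<longleftrightarrow> w \<in> {z \<in> E. (exchangeable Bm)\<^sup>*\<^sup>* x z}"
    using exchangeable_in_ground[OF mb zw] by blast
qed

lemma direct_sum_exchange_closed:
  assumes mb: "matroid_bases E Bm" and F: "exchange_closed Bm F"
  shows "Bm = direct_sum_bases ((\<lambda>J. J \<inter> F) ` Bm) ((\<lambda>J. J \<inter> (E - F)) ` Bm)"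
proof (intro equalityI subsetI)
  fix J assume J: "J \<in> Bm"
  hence "J = (J \<inter> F) \<union> (J \<inter> (E - F))" using matroid_basesD(3)[OF mb J] by auto
  thus "J \<in> direct_sum_bases ((\<lambda>J. J \<inter> F) ` Bm) ((\<lambda>J. J \<inter> (E - F)) ` Bm)"
    unfolding direct_sum_bases_def using J by blast
next
  fix C assume "C \<in> direct_sum_bases ((\<lambda>J. J \<inter> F) ` Bm) ((\<lambda>J. J \<inter> (E - F)) ` Bm)"
  then obtain J J' where J: "J \<in> Bm" "J' \<in> Bm" and C: "C = (J \<inter> F) \<union> (J' \<inter> (E - F))"
    unfolding direct_sum_bases_def by blast
  have "(J' - F) \<union> (J \<inter> F) \<in> Bm" by (rule exchange_closed_swap[OF mb F J])
  moreover have "J' \<inter> (E - F) = J' - F" using matroid_basesD(3)[OF mb J(2)] by auto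
  ultimately show "C \<in> Bm" using C by (simp add: Un_commute)
qed

text \<open>The classes of the equivalence relation generated by basis exchange split a matroid
  into a direct sum, so a connected matroid has a single class.\<close>
lemma connected_matroid_exchangeable_rtranclp:
  assumes mb: "matroid_bases E Bm" and con: "connected_matroid E Bm" and x: "x \<in> E" and y: "y \<in> E"
  shows "(exchangeable Bm)\<^sup>*\<^sup>* x y"
proof (rule ccontr)
  assume not_xy: "\<not> (exchangeable Bm)\<^sup>*\<^sup>* x y"
  define F where "F = {z \<in> E. (exchangeable Bm)\<^sup>*\<^sup>* x z}"
  have F: "exchange_closed Bm F" unfolding F_def by (rule exchange_closed_rtranclp_class[OF mb])
  have "F \<noteq> {}" "E - F \<noteq> {}" "F \<inter> (E - F) = {}" "F \<union> (E - F) = E"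
    using x y not_xy unfolding F_def by auto
  moreover have "matroid_bases F ((\<lambda>J. J \<inter> F) ` Bm)"
    by (rule matroid_bases_inter_exchange_closed[OF mb F]) (auto simp: F_def)
  moreover have "matroid_bases (E - F) ((\<lambda>J. J \<inter> (E - F)) ` Bm)"
    by (rule matroid_bases_inter_exchange_closed[OF mb exchange_closed_Diff[OF mb F]]) auto
  ultimately show False
    using con direct_sum_exchange_closed[OF mb F] unfolding connected_matroid_def
    by (meson exI[of _ F])
qed

lemma rtranclp_ex_step_leaving:
  assumes "R\<^sup>*\<^sup>* x z" "P x" "\<not> P z"
  shows "\<exists>a b. R a b \<and> P a \<and> \<not> P b"
  using assms
proof (induction rule: rtranclp_induct)
  case (step y z)
  show ?case
  proof (cases "P y")
    case True with step show ?thesis by blast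
  next
    case False with step show ?thesis by blast
  qed
qed simp

lemma connected_matroid_exchange_leaving:
  assumes mb: "matroid_bases E Bm" and con: "connected_matroid E Bm"
    and xy: "x \<in> E" "y \<in> E" "P x \<noteq> P y"
  obtains a b where "exchangeable Bm a b" "P a" "\<not> P b"
proof (cases "P x")
  case True
  thus ?thesis using rtranclp_ex_step_leaving[OF connected_matroid_exchangeable_rtranclp[OF mb con xy(1,2)]]
      xy(3) that by blast
next
  case False
  thus ?thesis using rtranclp_ex_step_leaving[OF connected_matroid_exchangeable_rtranclp[OF mb con xy(2,1)]]
      xy(3) that by blast
qed

section \<open>Cyclic intervals\<close>

lemma cyclic_interval_atLeastAtMost:
  assumes "lo \<le> hi" "hi < n"
  shows "cyclic_interval n {lo..hi}"
proof -
  have "{lo..hi} = {(lo + i) mod n | i. i < Suc (hi - lo)}"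
  proof (intro equalityI subsetI)
    fix z assume "z \<in> {lo..hi}"
    hence "z = (lo + (z - lo)) mod n" "z - lo < Suc (hi - lo)" using assms by auto
    thus "z \<in> {(lo + i) mod n | i. i < Suc (hi - lo)}" by blast
  next
    fix z assume "z \<in> {(lo + i) mod n | i. i < Suc (hi - lo)}"
    then obtain i where "i < Suc (hi - lo)" "z = (lo + i) mod n" by blast
    thus "z \<in> {lo..hi}" using assms by simp
  qed
  moreover have "lo < n" "1 \<le> Suc (hi - lo)" "Suc (hi - lo) \<le> n" using assms by auto
  ultimately show ?thesis unfolding cyclic_interval_def by blast
qed

lemma cyclic_interval_Diff_atLeastAtMost:
  assumes "0 < lo" "lo \<le> hi" "Suc hi < n"
  shows "cyclic_interval n ({..<n} - {lo..hi})"
proof -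
  define a where "a = Suc hi"
  define m where "m = n - Suc (hi - lo)"
  have "{..<n} - {lo..hi} = {(a + i) mod n | i. i < m}"
  proof (intro equalityI subsetI)
    fix z assume "z \<in> {..<n} - {lo..hi}"
    hence z: "z < n" "z < lo \<or> hi < z" by auto
    show "z \<in> {(a + i) mod n | i. i < m}"
    proof (cases "hi < z")
      case True
      hence "z = (a + (z - a)) mod n" "z - a < m" using z assms unfolding a_def m_def by auto
      thus ?thesis by blast
    next
      case False
      hence "(a + (z + n - a)) mod n = z" "z + n - a < m"
        using z assms unfolding a_def m_def by auto
      thus ?thesis by (intro CollectI exI[of _ "z + n - a"]) auto
    qed
  next
    fix z assume "z \<in> {(a + i) mod n | i. i < m}"
    then obtain i where i: "i < m" "z = (a + i) mod n" by blast
    show "z \<in> {..<n} - {lo..hi}"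
    proof (cases "a + i < n")
      case True
      thus ?thesis using i assms unfolding a_def by auto
    next
      case False
      hence "z = a + i - n" using i assms unfolding a_def m_def by (simp add: mod_if)
      moreover have "a + i - n < lo" using i False assms unfolding a_def m_def by auto
      ultimately show ?thesis using assms by auto
    qed
  qed
  moreover have "a < n" "1 \<le> m" "m \<le> n" using assms unfolding a_def m_def by auto
  ultimately show ?thesis unfolding cyclic_interval_def by blast
qed

lemma atLeastAtMost_Min_Max_or_gap:
  fixes S :: "nat set"
  assumes "finite S" "S \<noteq> {}"
  shows "S = {Min S..Max S} \<or> (\<exists>y. Min S < y \<and> y < Max S \<and> y \<notin> S)"
proof (cases "\<exists>y. Min S < y \<and> y < Max S \<and> y \<notin> S")
  case False
  have "{Min S..Max S} \<subseteq> S"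
  proof
    fix z assume "z \<in> {Min S..Max S}"
    hence "z = Min S \<or> z = Max S \<or> (Min S < z \<and> z < Max S)" by auto
    thus "z \<in> S" using False Min_in[OF assms] Max_in[OF assms] by blast
  qed
  moreover have "S \<subseteq> {Min S..Max S}" using assms by auto
  ultimately show ?thesis by blast
qed simp

lemma not_cyclic_interval_wrapping_gap:
  assumes X: "X \<subseteq> {..<n}" "0 \<in> X" "n - 1 \<in> X" and Y: "{..<n} - X \<noteq> {}"
    and not_cyclic: "\<not> cyclic_interval n X"
  obtains x y1 y2 where "x \<in> X" "y1 \<in> {..<n} - X" "y2 \<in> {..<n} - X" "0 < y1" "y1 < x" "x < y2"
proof -
  define lo where "lo = Min ({..<n} - X)"
  define hi where "hi = Max ({..<n} - X)"
  have lo_in: "lo \<in> {..<n} - X" unfolding lo_def by (rule Min_in) (simp, fact Y)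
  have hi_in: "hi \<in> {..<n} - X" unfolding hi_def by (rule Max_in) (simp, fact Y)
  have lo: "0 < lo" using lo_in X(2) by (cases lo) auto
  have "hi < n" "hi \<noteq> n - 1" using hi_in X(3) by auto
  hence hi: "Suc hi < n" by linarith
  have "lo \<le> hi" unfolding lo_def by (rule Min_le) (simp, fact hi_in)
  have "{..<n} - X \<noteq> {lo..hi}"
  proof
    assume complement: "{..<n} - X = {lo..hi}"
    have "X = {..<n} - ({..<n} - X)" using X(1) by auto
    also have "\<dots> = {..<n} - {lo..hi}" by (simp only: complement)
    finally show False
      using cyclic_interval_Diff_atLeastAtMost[OF lo \<open>lo \<le> hi\<close> hi] not_cyclic by simp
  qed
  moreover have "{..<n} - X = {lo..hi} \<or> (\<exists>y. lo < y \<and> y < hi \<and> y \<notin> {..<n} - X)"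
    unfolding lo_def hi_def by (rule atLeastAtMost_Min_Max_or_gap) (simp, fact Y)
  ultimately obtain x where "lo < x" "x < hi" "x \<notin> {..<n} - X" by blast
  moreover have "x < n" using \<open>x < hi\<close> hi by simp
  ultimately show ?thesis using that[of x lo hi] lo_in hi_in lo by blast
qed

lemma not_cyclic_interval_crossing:
  assumes X: "X \<subseteq> {..<n}" and not_cyclic: "\<not> cyclic_interval n X"
  obtains p q y1 y2 where "p \<in> X" "q \<in> X" "y1 \<in> {..<n} - X" "y2 \<in> {..<n} - X"
    "y1 < p" "p < y2" "q < y1 \<or> y2 < q"
proof -
  have ne: "X \<noteq> {}" and fin: "finite X" using not_cyclic X finite_subset
    unfolding cyclic_interval_def by auto
  define lo where "lo = Min X"
  define hi where "hi = Max X"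
  have lo: "lo \<in> X" "lo \<le> hi" and hi: "hi \<in> X" "hi < n"
    unfolding lo_def hi_def using ne fin X by auto
  have "X \<noteq> {lo..hi}" using cyclic_interval_atLeastAtMost[OF lo(2) hi(2)] not_cyclic by auto
  moreover have "X = {lo..hi} \<or> (\<exists>y. lo < y \<and> y < hi \<and> y \<notin> X)"
    unfolding lo_def hi_def by (rule atLeastAtMost_Min_Max_or_gap[OF fin ne])
  ultimately obtain y where "lo < y" "y < hi" "y \<notin> X" by blast
  hence y: "lo < y" "y < hi" "y \<in> {..<n} - X" using hi by auto
  show ?thesis
  proof (cases "\<exists>y'\<in>{..<n} - X. y' < lo \<or> hi < y'")
    case True
    then obtain y' where y': "y' \<in> {..<n} - X" "y' < lo \<or> hi < y'" by blast
    from y'(2) show ?thesis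
    proof
      assume "y' < lo"
      thus ?thesis using that[of lo hi y' y] lo hi y y' by auto
    next
      assume "hi < y'"
      thus ?thesis using that[of hi lo y y'] lo hi y y' by auto
    qed
  next
    case False
    have "0 \<in> X"
    proof (rule ccontr)
      assume "0 \<notin> X"
      hence "0 \<in> {..<n} - X" using hi(2) by auto
      thus False using False lo \<open>0 \<notin> X\<close> by force
    qed
    moreover have "n - 1 \<in> X"
    proof (rule ccontr)
      assume "n - 1 \<notin> X"
      hence "n - 1 \<in> {..<n} - X" using hi(2) by auto
      hence "\<not> hi < n - 1" using False by blast
      hence "n - 1 \<le> hi" by simp
      hence "hi = n - 1" using hi(2) by linarith
      thus False using hi(1) \<open>n - 1 \<notin> X\<close> by simp
    qed
    ultimately obtain x y1 y2 where "x \<in> X" "y1 \<in> {..<n} - X" "y2 \<in> {..<n} - X"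
        "0 < y1" "y1 < x" "x < y2"
      using not_cyclic_interval_wrapping_gap[OF X] not_cyclic y by blast
    thus ?thesis using that[of x 0 y1 y2] \<open>0 \<in> X\<close> by auto
  qed
qed

section \<open>Positroids\<close>

lemma nonzero_minors_strong_exchange:
  fixes A :: "'a :: field mat"
  assumes A: "A \<in> carrier_mat k n" and r: "vec_space.rank k A = k"
  shows "strong_exchange_bases {..<n} {I. I \<subseteq> {..<n} \<and> card I = k \<and> set_minor A k I \<noteq> 0}"
    (is "strong_exchange_bases _ ?B")
  unfolding strong_exchange_bases_def
proof (intro conjI ballI)
  show "?B \<noteq> {}" using vec_space.full_rank_ex_nonzero_minor[OF A r] by auto
next
  fix B1 B2 x assume B1: "B1 \<in> ?B" and B2: "B2 \<in> ?B" and x: "x \<in> B2 - B1"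
  have fin: "finite B1" "finite B2" using B1 B2 finite_subset by auto
  obtain u where u: "u \<in> B1 - B2" "set_minor A k (insert x (B1 - {u})) \<noteq> 0"
      "set_minor A k (insert u (B2 - {x})) \<noteq> 0"
    using set_minor_symmetric_exchange[OF A, of B1 B2 x] fin B1 B2 x by auto
  have "card (insert x (B1 - {u})) = card B1" "card (insert u (B2 - {x})) = card B2"
    using card_exchange[OF fin(1), of u x] card_exchange[OF fin(2), of x u] u x by auto
  thus "\<exists>u\<in>B1 - B2. insert x (B1 - {u}) \<in> ?B \<and> insert u (B2 - {x}) \<in> ?B"
    using u B1 B2 x by auto
qed auto

lemma positroid_matrixE:
  assumes "positroid n \<B>"
  obtains A k where "(A :: real mat) \<in> carrier_mat k n" "vec_space.rank k A = k"
    "\<And>I. I \<subseteq> {..<n} \<Longrightarrow> card I = k \<Longrightarrow> set_minor A k I \<ge> 0"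
    "\<B> = {I. I \<subseteq> {..<n} \<and> card I = k \<and> set_minor A k I \<noteq> 0}"
proof -
  obtain k A where A: "A \<in> carrier_mat k n" "vec_space.rank k A = k"
    and nonneg: "\<forall>I. I \<subseteq> {..<n} \<and> card I = k \<longrightarrow> max_minor A I \<ge> 0"
    and \<B>: "\<B> = {I. I \<subseteq> {..<n} \<and> card I = k \<and> max_minor A I \<noteq> 0}"
    using assms unfolding positroid_def by blast
  show ?thesis
    by (rule that[OF A]) (use nonneg \<B> max_minor_eq_set_minor[OF A(1)] in auto)
qed

text \<open>S + a + c and S + b + d glue bases of M|X and M/X; S + a + b is no basis as it meets X
  in more elements than a basis of M|X.\<close>
lemma exchanges_restr_contr_bases:
  assumes sb: "strong_exchange_bases E Bs" and X: "X \<subseteq> E"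
    and ab: "exchangeable (restr_bases Bs X) a b" and cd: "exchangeable (contr_bases Bs X) c d"
  obtains S where "insert a (insert c S) \<in> Bs" "insert b (insert d S) \<in> Bs"
    "insert a (insert b S) \<notin> Bs" "a \<notin> S" "b \<notin> S" "c \<notin> S" "d \<notin> S"
    "a \<in> X" "b \<in> X" "a \<noteq> b" "c \<notin> X" "d \<notin> X" "c \<noteq> d"
proof -
  obtain J where J: "J \<in> restr_bases Bs X" "a \<in> J" "b \<notin> J" "insert b (J - {a}) \<in> restr_bases Bs X"
    using ab unfolding exchangeable_def by blast
  obtain K where K: "K \<in> contr_bases Bs X" "c \<in> K" "d \<notin> K" "insert d (K - {c}) \<in> contr_bases Bs X"
    using cd unfolding exchangeable_def by blast
  have JX: "J \<subseteq> X" "insert b (J - {a}) \<subseteq> X"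
    using J unfolding restr_bases_def by auto
  obtain B where B: "K = B - X" "B \<in> Bs" "B \<inter> X \<in> restr_bases Bs X"
    using contr_basesD[OF K(1)] by blast
  obtain B' where B': "insert d (K - {c}) = B' - X" "B' \<in> Bs" "B' \<inter> X \<in> restr_bases Bs X"
    using contr_basesD[OF K(4)] by blast
  have KX: "K \<inter> X = {}" "d \<notin> X" using B B' by auto
  define S where "S = (J - {a}) \<union> (K - {c})"
  have "J \<union> K \<in> Bs" using union_restr_basis_contr_part[OF sb J(1) B(2,3)] B(1) by simp
  moreover have "J \<union> K = insert a (insert c S)" unfolding S_def using J K by auto
  moreover have "insert b (J - {a}) \<union> insert d (K - {c}) \<in> Bs"
    using union_restr_basis_contr_part[OF sb J(4) B'(2,3)] B'(1) by simp
  moreover have "insert b (J - {a}) \<union> insert d (K - {c}) = insert b (insert d S)"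
    unfolding S_def by auto
  moreover have "insert a (insert b S) \<notin> Bs"
  proof
    assume "insert a (insert b S) \<in> Bs"
    moreover have "insert a (insert b S) \<inter> X = insert b J" unfolding S_def using J JX KX by auto
    moreover have "finite J" using J(1) strong_exchange_basesD(3,4)[OF sb] X
      unfolding restr_bases_def by (auto intro: finite_subset)
    ultimately show False using card_inter_le_restr_basis[OF sb J(1)] J(3) by fastforce
  qed
  moreover have "a \<notin> S" "b \<notin> S" "c \<notin> S" "d \<notin> S" "a \<in> X" "b \<in> X" "a \<noteq> b" "c \<notin> X" "c \<noteq> d"
    unfolding S_def using J K JX KX by auto
  ultimately show ?thesis using that KX(2) by simp
qed

text \<open>Up to exchanging a and b, the order is d < a < c < b or a < c < b < d; in the three-term
  relation of these four indices D a b multiplies a single term on one side, while the other side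
  contains the positive product D a c * D b d.\<close>
lemma nonneg_three_term_crossing:
  fixes D :: "nat \<Rightarrow> nat \<Rightarrow> real" and a b c d :: nat
  assumes sym: "\<And>x y. D x y = D y x"
    and nonneg: "\<And>x y. x \<in> {a,b,c,d} \<Longrightarrow> y \<in> {a,b,c,d} \<Longrightarrow> x \<noteq> y \<Longrightarrow> D x y \<ge> 0"
    and three_term: "\<And>w x y z. w \<in> {a,b,c,d} \<Longrightarrow> x \<in> {a,b,c,d} \<Longrightarrow> y \<in> {a,b,c,d} \<Longrightarrow>
      z \<in> {a,b,c,d} \<Longrightarrow> w < x \<Longrightarrow> x < y \<Longrightarrow> y < z \<Longrightarrow> D w y * D x z = D w x * D y z + D w z * D x y"
    and pos: "D a c > 0" "D b d > 0"
    and between: "min a b < c" "c < max a b" and outside: "d < min a b \<or> max a b < d"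
  shows "D a b \<noteq> 0"
proof
  assume zero: "D a b = 0"
  consider "a < b" "d < a" | "a < b" "b < d" | "b < a" "d < b" | "b < a" "a < d"
    using between outside by linarith
  thus False
  proof cases
    case 1
    have "D d c * D a b = D d a * D c b + D d b * D a c" using three_term[of d a c b] 1 between by simp
    moreover have "D d a * D c b \<ge> 0" using nonneg[of d a] nonneg[of c b] 1 between by simp
    moreover have "D d b * D a c > 0" using pos sym[of d b] by simp
    ultimately show False using zero by simp
  next
    case 2
    have "D a b * D c d = D a c * D b d + D a d * D c b" using three_term[of a c b d] 2 between by simp
    moreover have "D a d * D c b \<ge> 0" using nonneg[of a d] nonneg[of c b] 2 between by simp
    moreover have "D a c * D b d > 0" using pos by simp
    ultimately show False using zero by simp
  next
    case 3
    have "D d c * D b a = D d b * D c a + D d a * D b c" using three_term[of d b c a] 3 between by simp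
    moreover have "D d a * D b c \<ge> 0" using nonneg[of d a] nonneg[of b c] 3 between by simp
    moreover have "D d b * D c a > 0" using pos sym[of d b] sym[of c a] by simp
    ultimately show False using zero sym[of b a] by simp
  next
    case 4
    have "D b a * D c d = D b c * D a d + D b d * D c a" using three_term[of b c a d] 4 between by simp
    moreover have "D b c * D a d \<ge> 0" using nonneg[of b c] nonneg[of a d] 4 between by simp
    moreover have "D b d * D c a > 0" using pos sym[of c a] by simp
    ultimately show False using zero sym[of b a] by simp
  qed
qed

lemma positroid_exchanges_noncrossing:
  fixes A :: "real mat"
  assumes A: "A \<in> carrier_mat k n" "vec_space.rank k A = k"
    and nonneg: "\<And>I. I \<subseteq> {..<n} \<Longrightarrow> card I = k \<Longrightarrow> set_minor A k I \<ge> 0"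
    and \<B>: "\<B> = {I. I \<subseteq> {..<n} \<and> card I = k \<and> set_minor A k I \<noteq> 0}"
    and X: "X \<subseteq> {..<n}"
    and ab: "exchangeable (restr_bases \<B> X) a b" and cd: "exchangeable (contr_bases \<B> X) c d"
    and between: "min a b < c" "c < max a b"
  shows "min a b < d \<and> d < max a b"
proof (rule ccontr)
  assume outside: "\<not> (min a b < d \<and> d < max a b)"
  have sb: "strong_exchange_bases {..<n} \<B>" using nonzero_minors_strong_exchange[OF A] \<B> by simp
  obtain S where ac: "insert a (insert c S) \<in> \<B>" and bd: "insert b (insert d S) \<in> \<B>"
    and ab_not: "insert a (insert b S) \<notin> \<B>" and notin: "a \<notin> S" "b \<notin> S" "c \<notin> S" "d \<notin> S"
    and X_ab: "a \<in> X" "b \<in> X" "a \<noteq> b" and X_cd: "c \<notin> X" "d \<notin> X" "c \<noteq> d"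
    by (rule exchanges_restr_contr_bases[OF sb X ab cd])
  have S: "S \<subseteq> {..<n}" "finite S" and n: "a < n" "b < n" "c < n" "d < n"
    using ac bd \<B> finite_subset by auto
  have "a \<noteq> c" using X_ab X_cd by auto
  hence "card S + 2 = k" using ac \<B> notin S(2) by auto
  define D where "D x y = set_minor A k (insert x (insert y S))" for x y
  have "D a b \<noteq> 0"
  proof (rule nonneg_three_term_crossing)
    show "D x y = D y x" for x y unfolding D_def by (simp add: insert_commute)
    show "D x y \<ge> 0" if "x \<in> {a,b,c,d}" "y \<in> {a,b,c,d}" "x \<noteq> y" for x y
      unfolding D_def using nonneg that S n notin \<open>card S + 2 = k\<close> by auto
    show "D w y * D x z = D w x * D y z + D w z * D x y"
      if "w \<in> {a,b,c,d}" "x \<in> {a,b,c,d}" "y \<in> {a,b,c,d}" "z \<in> {a,b,c,d}" "w < x" "x < y" "y < z"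
      for w x y z
      unfolding D_def
      by (rule three_term_pluecker[OF A(1) S(2) \<open>card S + 2 = k\<close> that(5-7)]) (use that notin in auto)
    show "D a c > 0" "D b d > 0"
      using ac bd nonneg[of "insert a (insert c S)"] nonneg[of "insert b (insert d S)"] \<B>
      unfolding D_def by auto
    have "d \<noteq> a" "d \<noteq> b" using X_ab X_cd by auto
    thus "d < min a b \<or> max a b < d" using outside by (auto simp: min_def max_def)
  qed fact+
  moreover have "D a b = 0" using ab_not \<B> S n notin X_ab \<open>card S + 2 = k\<close> unfolding D_def by auto
  ultimately show False by contradiction
qed

theorem lemma6p11:
  fixes n :: nat and \<B> :: "nat set set" and X :: "nat set"
  assumes "positroid n \<B>"
    and "X \<subseteq> {..<n}"
    and "connected_matroid X (restr_bases \<B> X)"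
    and "connected_matroid ({..<n} - X) (contr_bases \<B> X)"
  shows "cyclic_interval n X"
proof (rule ccontr)
  assume "\<not> cyclic_interval n X"
  then obtain p q y1 y2 where X: "p \<in> X" "q \<in> X" and Y: "y1 \<in> {..<n} - X" "y2 \<in> {..<n} - X"
    and cross: "y1 < p" "p < y2" "q < y1 \<or> y2 < q"
    using not_cyclic_interval_crossing[OF assms(2)] by blast
  obtain A k where A: "(A :: real mat) \<in> carrier_mat k n" "vec_space.rank k A = k"
    and nonneg: "\<And>I. I \<subseteq> {..<n} \<Longrightarrow> card I = k \<Longrightarrow> set_minor A k I \<ge> 0"
    and \<B>: "\<B> = {I. I \<subseteq> {..<n} \<and> card I = k \<and> set_minor A k I \<noteq> 0}"
    using positroid_matrixE[OF assms(1)] by blast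
  have sb: "strong_exchange_bases {..<n} \<B>" using nonzero_minors_strong_exchange[OF A] \<B> by simp
  note restr = matroid_bases_restr[OF sb assms(2)] and contr = matroid_bases_contr[OF sb assms(2)]
  obtain a b where ab: "exchangeable (restr_bases \<B> X) a b" "y1 < a \<and> a < y2" "\<not> (y1 < b \<and> b < y2)"
    by (rule connected_matroid_exchange_leaving[OF restr assms(3) X, of "\<lambda>z. y1 < z \<and> z < y2"])
      (use cross in auto)
  have "b \<in> X" using exchangeable_in_ground[OF restr ab(1)] by simp
  hence "b \<noteq> y1" "b \<noteq> y2" using Y by auto
  hence "(min a b < y1 \<and> y1 < max a b) \<noteq> (min a b < y2 \<and> y2 < max a b)"
    using ab(2,3) by (auto simp: min_def max_def)
  then obtain c d where "exchangeable (contr_bases \<B> X) c d" "min a b < c \<and> c < max a b"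
      "\<not> (min a b < d \<and> d < max a b)"
    by (rule connected_matroid_exchange_leaving[OF contr assms(4) Y])
  thus False using positroid_exchanges_noncrossing[OF A nonneg \<B> assms(2) ab(1)] by blast
qed

end
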